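(* Suppose $f$ is $L_f$-smooth, $L_{\mathbf S}^{\max}<\infty$, and $\Delta:=\tilde f^{\inf}-f^{\inf}>0$. Let $D=L_f\sqrt{L_{\mathcal D}L_{\mathbf S}^{\max}}$, $\delta^0=\tilde f(x^0)-\tilde f^{\inf}$, fix $\varepsilon>0$, and let $$T\ge\frac{12\delta^0D^2}{\varepsilon^4}\max\{3\delta^0,\Delta\},\qquad \gamma=\min\Big\{\frac{1}{D\sqrt T},\frac{\varepsilon^2}{2D^2\Delta}\Big\}.$$ Then the iterates of Double Sketched GD satisfy $\min_{0\le t<T}\mathbb E\|\nabla\tilde f(x^t)\|^2\le\varepsilon^2$.
   Context: Let $f:\mathbb R^d\to\mathbb R$, fix $s\in\mathbb R^d$, and let $\mathcal D$ be a distribution of random matrices $\mathbf S\in\mathbb R^{d\times d}$ with $\mathbb E[\mathbf S]=I$ and $\mathbb E[\mathbf S^\top\mathbf S]$ finite. Define $f_{\mathbf S}(x)=f(s+\mathbf S(x-s))$, $\tilde f(x)=\mathbb E_{\mathbf S\sim\mathcal D}[f_{\mathbf S}(x)]$, $\tilde f^{\inf}=\inf_x\tilde f(x)$, $L_{\mathcal D}=\lambda_{\max}(\mathbb E[\mathbf S^\top\mathbf S])$, and $L_{\mathbf S}^{\max}$ the smallest constant with $\lambda_{\max}(\mathbf S^\top\mathbf S)\le L_{\mathbf S}^{\max}$ a.s. Double Sketched GD: given $x^0$, for $t\ge0$ draw $\mathbf S^t\sim\mathcal D$ independently of the past and set $x^{t+1}=x^t-\gamma(\mathbf S^t)^\top\nabla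 f(s+\mathbf S^t(x^t-s))$. $f$ is $L_f$-smooth if differentiable, $f(x+h)\le f(x)+\langle\nabla f(x),h\rangle+\frac{L_f}{2}\|h\|^2$ for all $x,h$, and bounded below by $f^{\inf}\in\mathbb R$. *)

theory Defs
  imports "HOL-Probability.Probability"
begin

type_synonym 'n mat = "real^'n^'n"

definition lambda_max :: "real^'n^'n \<Rightarrow> real" where
  "lambda_max M = Max {l. \<exists>v. v \<noteq> 0 \<and> M *v v = l *\<^sub>R v}"

definition grad :: "(real^'n \<Rightarrow> real) \<Rightarrow> real^'n \<Rightarrow> real^'n" where
  "grad F x = (THE g. (F has_derivative (\<lambda>h. g \<bullet> h)) (at x))"

definition L_smooth :: "real \<Rightarrow> (real^'n \<Rightarrow> real) \<Rightarrow> (real^'n \<Rightarrow> real^'n) \<Rightarrow> bool" where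
  "L_smooth L f gf \<longleftrightarrow>
     (\<forall>x. (f has_derivative (\<lambda>h. gf x \<bullet> h)) (at x)) \<and>
     (\<forall>x h. f (x + h) \<le> f x + gf x \<bullet> h + L / 2 * (norm h)\<^sup>2)"

definition f_sketch :: "(real^'n \<Rightarrow> real) \<Rightarrow> real^'n \<Rightarrow> real^'n^'n \<Rightarrow> real^'n \<Rightarrow> real" where
  "f_sketch f s S x = f (s + S *v (x - s))"

definition f_tilde :: "(real^'n \<Rightarrow> real) \<Rightarrow> real^'n \<Rightarrow> (real^'n^'n) measure \<Rightarrow> real^'n \<Rightarrow> real" where
  "f_tilde f s D x = (\<integral>S. f_sketch f s S x \<partial>D)"

definition L_D :: "(real^'n^'n) measure \<Rightarrow> real" where
  "L_D D = lambda_max (\<integral>S. transpose S ** S \<partial>D)"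

definition L_S_max :: "(real^'n^'n) measure \<Rightarrow> real" where
  "L_S_max D = Inf {L. AE S in D. lambda_max (transpose S ** S) \<le> L}"

text \<open>Double Sketched GD iterates driven by a sequence of sketches \<omega> t = S^t.\<close>
fun dsgd :: "(real^'n \<Rightarrow> real^'n) \<Rightarrow> real^'n \<Rightarrow> real \<Rightarrow> real^'n
              \<Rightarrow> (nat \<Rightarrow> real^'n^'n) \<Rightarrow> nat \<Rightarrow> real^'n" where
  "dsgd gf s \<gamma> x0 \<omega> 0 = x0"
| "dsgd gf s \<gamma> x0 \<omega> (Suc t) =
     dsgd gf s \<gamma> x0 \<omega> t
       - \<gamma> *\<^sub>R (transpose (\<omega> t) *v gf (s + \<omega> t *v (dsgd gf s \<gamma> x0 \<omega> t - s)))"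

end

theory Submission
  imports Defs
begin

text \<open>Averaging over the sketch, f~ is (Lf L_D)-smooth, and its gradient is the expectation of
  the Double Sketched GD direction S^T grad f(s + S(x - s)), whose second moment is at most
  2 Lf L_S^max (f~(x) - f^inf). The descent lemma for f~ therefore gives, for
  delta_t = E f~(x_t) - inf f~, the perturbed recursion
  delta_(t+1) + gamma E|grad f~(x_t)|^2 <= (1 + D^2 gamma^2) delta_t + D^2 gamma^2 Delta.
  The step size makes (1 + D^2 gamma^2)^T <= 3 and D^2 gamma^2 Delta <= gamma eps^2 / 2, so if every
  E|grad f~(x_t)|^2 exceeded eps^2, then delta_T would be negative.\<close>

section \<open>Quadratic forms and the largest eigenvalue\<close>

lemma inner_matrix_vector_mult_transpose: "x \<bullet> (M *v y) = (transpose M *v x) \<bullet> (y::real^'n)"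
  by (metis transpose_transpose vector_transpose_matrix dot_lmul_matrix)

lemma symmetric_matrix_inner_commute:
  "transpose M = M \<Longrightarrow> x \<bullet> (M *v y) = y \<bullet> (M *v (x::real^'n))"
  by (metis inner_matrix_vector_mult_transpose inner_commute)

lemma symmetric_matrix_finite_eigenvalues:
  fixes M :: "real^'n^'n" assumes sym: "transpose M = M"
  shows "finite {l. \<exists>v. v \<noteq> 0 \<and> M *v v = l *\<^sub>R v}"
proof -
  define E where "E = {l. \<exists>v. v \<noteq> 0 \<and> M *v v = l *\<^sub>R v}"
  define ev where "ev l = (SOME v. v \<noteq> 0 \<and> M *v v = l *\<^sub>R v)" for l
  have ev: "ev l \<noteq> 0 \<and> M *v ev l = l *\<^sub>R ev l" if "l \<in> E" for l
    unfolding ev_def by (rule someI_ex) (use that in \<open>simp add: E_def\<close>)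
  have orth: "ev l1 \<bullet> ev l2 = 0" if "l1 \<in> E" "l2 \<in> E" "l1 \<noteq> l2" for l1 l2
  proof -
    have "l1 * (ev l1 \<bullet> ev l2) = (M *v ev l1) \<bullet> ev l2" using ev[OF that(1)] by simp
    also have "\<dots> = ev l1 \<bullet> (M *v ev l2)"
      using symmetric_matrix_inner_commute[OF sym] by (metis inner_commute)
    also have "\<dots> = l2 * (ev l1 \<bullet> ev l2)" using ev[OF that(2)] by simp
    finally have "(l1 - l2) * (ev l1 \<bullet> ev l2) = 0" by (simp add: algebra_simps)
    then show ?thesis using that(3) by simp
  qed
  have inj: "inj_on ev E"
  proof
    fix l1 l2 assume "l1 \<in> E" "l2 \<in> E" "ev l1 = ev l2"
    then have "l1 *\<^sub>R ev l1 = l2 *\<^sub>R ev l1" "ev l1 \<noteq> 0" using ev by metis+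
    then show "l1 = l2" by (simp add: scaleR_cancel_right)
  qed
  have "pairwise orthogonal (ev ` E)"
    unfolding pairwise_def orthogonal_def using orth by auto
  moreover have "0 \<notin> ev ` E" using ev by auto
  ultimately have "independent (ev ` E)" by (rule pairwise_orthogonal_independent)
  then have "finite (ev ` E)" using independent_imp_finite by blast
  then show ?thesis using inj finite_imageD unfolding E_def by blast
qed

lemma symmetric_matrix_maximizer_eigenvector:
  fixes M :: "real^'n^'n"
  assumes sym: "transpose M = M" and nv: "norm v = 1"
    and max: "\<And>z. z \<bullet> (M *v z) \<le> v \<bullet> (M *v v) * (norm z)^2"
  shows "M *v v = (v \<bullet> (M *v v)) *\<^sub>R v"
proof -
  let ?q = "\<lambda>x. x \<bullet> (M *v x)"
  have vv: "v \<bullet> v = 1" using nv by (simp add: norm_eq_1)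
  define w where "w = M *v v - ?q v *\<^sub>R v"
  have wv: "w \<bullet> v = 0"
  proof -
    have "(M *v v) \<bullet> v = v \<bullet> (M *v v)" by (rule inner_commute)
    then show ?thesis unfolding w_def using vv by (simp add: inner_diff_left)
  qed
  have wMv: "w \<bullet> (M *v v) = w \<bullet> w"
    unfolding w_def by (simp add: inner_diff_left inner_diff_right inner_commute vv algebra_simps)
  \<comment> \<open>Perturbing v along w raises the quadratic form at first order in t, but the
      constraint only at second order.\<close>
  have perturb: "2*t*(w \<bullet> w) \<le> t^2 * (?q v * (w \<bullet> w) - ?q w)" for t
  proof -
    have "?q (v + t *\<^sub>R w) = ?q v + t * (v \<bullet> (M *v w)) + t * (w \<bullet> (M *v v)) + t^2 * ?q w"
      by (simp add: matrix_vector_right_distrib matrix_vector_mult_scaleR inner_add_left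
          inner_add_right power2_eq_square algebra_simps)
    also have "v \<bullet> (M *v w) = w \<bullet> (M *v v)" using symmetric_matrix_inner_commute[OF sym] by blast
    finally have q: "?q (v + t *\<^sub>R w) = ?q v + 2*t*(w \<bullet> w) + t^2 * ?q w" using wMv by simp
    have "(norm (v + t *\<^sub>R w))^2 = (v + t *\<^sub>R w) \<bullet> (v + t *\<^sub>R w)" by (simp add: power2_norm_eq_inner)
    also have "\<dots> = 1 + t^2 * (w \<bullet> w)"
      using vv wv by (simp add: inner_add_left inner_add_right inner_commute power2_eq_square)
    finally have n: "(norm (v + t *\<^sub>R w))^2 = 1 + t^2 * (w \<bullet> w)" .
    show ?thesis using max[of "v + t *\<^sub>R w"] q n by (simp add: algebra_simps)
  qed
  have "w \<bullet> w = 0"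
  proof (rule ccontr)
    assume "w \<bullet> w \<noteq> 0"
    then have a: "w \<bullet> w > 0" by (metis inner_gt_zero_iff inner_eq_zero_iff)
    define K where "K = ?q v * (w \<bullet> w) - ?q w"
    define t where "t = (w \<bullet> w) / (\<bar>K\<bar> + 1)"
    have t: "t > 0" unfolding t_def using a by (simp add: add_pos_nonneg)
    have "2*t*(w \<bullet> w) \<le> t^2 * K" using perturb unfolding K_def by blast
    then have "2*(w \<bullet> w) \<le> t * K" using t by (simp add: power2_eq_square mult.assoc)
    also have "\<dots> \<le> t * \<bar>K\<bar>" using t by (simp add: mult_left_mono)
    also have "\<dots> < w \<bullet> w" unfolding t_def using a by (simp add: field_simps)
    finally show False using a by simp
  qed
  then show ?thesis unfolding w_def by simp
qed

lemma inner_mult_le_lambda_max: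
  fixes M :: "real^'n^'n" assumes sym: "transpose M = M"
  shows "u \<bullet> (M *v u) \<le> lambda_max M * (norm u)^2"
proof -
  let ?q = "\<lambda>x. x \<bullet> (M *v x)"
  have homogeneous: "?q (c *\<^sub>R z) = c^2 * ?q z" for c z
    unfolding matrix_vector_mult_scaleR by (simp add: power2_eq_square)
  have cont: "continuous_on (sphere 0 1) ?q"
    by (intro continuous_intros linear_continuous_on matrix_vector_mul_bounded_linear)
  obtain v where v: "norm v = 1" "\<And>y. norm y = 1 \<Longrightarrow> ?q y \<le> ?q v"
    using continuous_attains_sup[OF compact_sphere _ cont]
    by (metis norm_axis_1 mem_sphere_0 empty_iff)
  have scaled: "?q z \<le> ?q v * (norm z)^2" for z
  proof (cases "z = 0")
    case False
    then have "?q ((1/norm z) *\<^sub>R z) \<le> ?q v" by (intro v(2)) simp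
    then show ?thesis using False unfolding homogeneous by (simp add: field_simps)
  qed simp
  have "M *v v = ?q v *\<^sub>R v"
    by (rule symmetric_matrix_maximizer_eigenvector[OF sym v(1) scaled])
  moreover have "v \<noteq> 0" using v(1) by auto
  ultimately have "?q v \<le> lambda_max M" unfolding lambda_max_def
    by (intro Max_ge symmetric_matrix_finite_eigenvalues[OF sym]) blast
  then have "?q v * (norm u)^2 \<le> lambda_max M * (norm u)^2" by (simp add: mult_right_mono)
  with scaled[of u] show ?thesis by linarith
qed

lemma bounded_linear_matrix_vector_mult_left: "bounded_linear (\<lambda>A::real^'n^'m. A *v u)"
  unfolding linear_conv_bounded_linear[symmetric]
  by (rule linearI) (simp_all add: matrix_vector_mult_add_rdistrib scaleR_matrix_vector_assoc)

lemma bounded_linear_transpose: "bounded_linear (transpose :: real^'n^'m \<Rightarrow> real^'m^'n)"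
  unfolding linear_conv_bounded_linear[symmetric]
  by (rule linearI) (simp_all add: transpose_def vec_eq_iff)

lemma bounded_linear_quadratic_form: "bounded_linear (\<lambda>A::real^'n^'n. u \<bullet> (A *v u))"
  by (rule bounded_linear_compose[OF bounded_linear_inner_right bounded_linear_matrix_vector_mult_left])

lemma inner_transpose_mult_self: "u \<bullet> ((transpose S ** S) *v u) = (norm (S *v u))^2"
  for S :: "real^'n^'m"
proof -
  have "u \<bullet> ((transpose S ** S) *v u) = u \<bullet> (transpose S *v (S *v u))"
    by (simp add: matrix_vector_mul_assoc)
  also have "\<dots> = (S *v u) \<bullet> (S *v u)"
    using inner_matrix_vector_mult_transpose[of u "transpose S" "S *v u"] by simp
  finally show ?thesis by (simp add: power2_norm_eq_inner)
qed

lemma transpose_mult_self_symmetric: "transpose (transpose S ** S) = transpose S ** S"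
  for S :: "real^'n^'m" by (simp add: matrix_transpose_mul)

lemma norm_matrix_vector_mult_sq_le:
  "(norm (S *v u))^2 \<le> lambda_max (transpose S ** S) * (norm u)^2" for S :: "real^'n^'n"
  using inner_mult_le_lambda_max[OF transpose_mult_self_symmetric[of S], of u]
  by (simp add: inner_transpose_mult_self)

lemma norm_transpose_matrix_vector_mult_le:
  fixes S :: "real^'n^'n"
  assumes S: "\<And>u. (norm (S *v u))^2 \<le> L * (norm u)^2"
  shows "norm (transpose S *v w) \<le> sqrt L * norm w"
proof -
  let ?v = "transpose S *v w"
  have "0 \<le> L" using S[of "axis undefined 1"] by (simp add: norm_axis_1) (metis zero_le_power2 order_trans)
  have "(norm ?v)^2 = w \<bullet> (S *v ?v)"
    using inner_matrix_vector_mult_transpose[of w S ?v] by (simp add: power2_norm_eq_inner)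
  also have "\<dots> \<le> norm w * norm (S *v ?v)" by (rule norm_cauchy_schwarz)
  also have "\<dots> \<le> norm w * (sqrt L * norm ?v)"
    using real_sqrt_le_mono[OF S[of ?v]] by (intro mult_left_mono) (auto simp: real_sqrt_mult)
  finally have "norm ?v * norm ?v \<le> norm ?v * (sqrt L * norm w)"
    by (simp add: power2_eq_square algebra_simps)
  then show ?thesis
    using \<open>0 \<le> L\<close> by (cases "norm ?v = 0") (auto simp: mult_le_cancel_left)
qed

lemma continuous_on_matrix_vector_mult [continuous_intros]:
  "continuous_on S A \<Longrightarrow> continuous_on S v \<Longrightarrow> continuous_on S (\<lambda>x. (A x :: real^'n^'m) *v v x)"
  unfolding matrix_vector_mult_def by (intro continuous_intros)

lemma continuous_on_transpose [continuous_intros]: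
  "continuous_on S A \<Longrightarrow> continuous_on S (\<lambda>x. transpose (A x :: real^'n^'m))"
  unfolding transpose_def by (intro continuous_intros)

lemma borel_measurable_matrix_vector_mult:
  "A \<in> borel_measurable M \<Longrightarrow> v \<in> borel_measurable M \<Longrightarrow>
   (\<lambda>x. (A x :: real^'n^'m) *v v x) \<in> borel_measurable M"
  by (rule borel_measurable_continuous_Pair[where H="\<lambda>A v. A *v v"]) (auto intro!: continuous_intros)

lemma borel_measurable_transpose:
  "A \<in> borel_measurable M \<Longrightarrow> (\<lambda>x. transpose (A x :: real^'n^'m)) \<in> borel_measurable M"
  by (rule measurable_compose[OF _ borel_measurable_continuous_onI]) (auto intro!: continuous_intros)

text \<open>A gradient is the pointwise limit of measurable difference quotients.\<close>
lemma borel_measurable_gradient: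
  fixes F :: "'a::euclidean_space \<Rightarrow> real"
  assumes F: "\<And>x. (F has_derivative (\<lambda>h. g x \<bullet> h)) (at x)"
  shows "g \<in> borel_measurable borel"
proof -
  define t where "t m = inverse (real (Suc m))" for m
  have t: "filterlim t (at 0) sequentially"
    unfolding filterlim_at t_def using LIMSEQ_inverse_real_of_nat by (simp del: of_nat_Suc)
  have cont: "continuous_on UNIV F"
    using F has_derivative_continuous by (metis continuous_at_imp_continuous_on)
  have F_shift: "(\<lambda>x. F (x + c)) \<in> borel_measurable borel" for c
    by (intro borel_measurable_continuous_onI continuous_on_compose2[OF cont])
       (auto intro: continuous_intros)
  define Q where "Q m x = (\<Sum>i\<in>Basis. ((F (x + t m *\<^sub>R i) - F x) / t m) *\<^sub>R i)" for m x
  have F_meas: "F \<in> borel_measurable borel" using F_shift[of 0] by simp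
  have "Q m \<in> borel_measurable borel" for m
    unfolding Q_def
    by (intro borel_measurable_sum borel_measurable_scaleR borel_measurable_divide
        borel_measurable_diff F_shift F_meas borel_measurable_const)
  moreover have "(\<lambda>m. Q m x) \<longlonglongrightarrow> g x" for x
  proof -
    have "(\<lambda>m. (F (x + t m *\<^sub>R i) - F x) / t m) \<longlonglongrightarrow> g x \<bullet> i" for i
    proof -
      have line: "((\<lambda>r. x + r *\<^sub>R i) has_derivative (\<lambda>r. r *\<^sub>R i)) (at 0)"
        by (auto intro!: derivative_eq_intros)
      have "((\<lambda>r. F (x + r *\<^sub>R i)) has_derivative (\<lambda>r. g x \<bullet> (r *\<^sub>R i))) (at 0)"
        using has_derivative_compose[OF line, of F "\<lambda>h. g x \<bullet> h"] F[of x] by simp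
      then have "((\<lambda>r. F (x + r *\<^sub>R i)) has_real_derivative g x \<bullet> i) (at 0)"
        unfolding has_field_derivative_def by (simp add: mult_commute_abs)
      then have "((\<lambda>r. (F (x + r *\<^sub>R i) - F x) / r) \<longlongrightarrow> g x \<bullet> i) (at 0)"
        unfolding DERIV_def by simp
      from filterlim_compose[OF this t] show ?thesis by (simp add: o_def)
    qed
    then have "(\<lambda>m. Q m x) \<longlonglongrightarrow> (\<Sum>i\<in>Basis. (g x \<bullet> i) *\<^sub>R i)"
      unfolding Q_def by (intro tendsto_sum tendsto_scaleR tendsto_const)
    then show ?thesis by (simp add: euclidean_representation)
  qed
  ultimately show ?thesis by (rule borel_measurable_LIMSEQ_metric)
qed

lemma AE_le_Inf_AE_bounds:
  fixes g :: "'a \<Rightarrow> real"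
  assumes "\<exists>L. AE x in M. g x \<le> L"
  shows "AE x in M. g x \<le> Inf {L. AE x in M. g x \<le> L}"
proof -
  define A where "A = {L. AE x in M. g x \<le> L}"
  have "A \<noteq> {}" using assms unfolding A_def by blast
  have "AE x in M. g x \<le> Inf A + inverse (Suc m)" for m :: nat
  proof -
    have "Inf A < Inf A + inverse (Suc m)" by simp
    then obtain L where "L \<in> A" "L < Inf A + inverse (Suc m)"
      using cInf_lessD[OF \<open>A \<noteq> {}\<close>] by blast
    then show ?thesis unfolding A_def by (auto elim: eventually_mono)
  qed
  then have "AE x in M. \<forall>m::nat. g x \<le> Inf A + inverse (Suc m)"
    by (simp add: AE_all_countable)
  then show ?thesis
  proof (rule eventually_mono)
    fix x assume x: "\<forall>m::nat. g x \<le> Inf A + inverse (Suc m)"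
    show "g x \<le> Inf {L. AE x in M. g x \<le> L}"
      unfolding A_def[symmetric]
    proof (rule field_le_epsilon)
      fix e :: real assume "0 < e"
      then obtain m where "inverse (real (Suc m)) < e" using reals_Archimedean by blast
      then show "g x \<le> Inf A + e" using x[rule_format, of m] by linarith
    qed
  qed
qed

section \<open>Smooth functions bounded below\<close>

lemma L_smooth_gradient: "L_smooth L f gf \<Longrightarrow> (f has_derivative (\<lambda>h. gf x \<bullet> h)) (at x)"
  unfolding L_smooth_def by blast

lemma L_smooth_upper_bound:
  "L_smooth L f gf \<Longrightarrow> f (x + h) \<le> f x + gf x \<bullet> h + L / 2 * (norm h)^2"
  unfolding L_smooth_def by blast

lemma L_smooth_nonpos_constant:
  fixes f :: "real^'n \<Rightarrow> real"
  assumes smooth: "L_smooth L f gf" and bdd: "bdd_below (range f)" and L: "L \<le> 0"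
  shows "f x = f y"
proof -
  have grad0: "gf z = 0" for z
  proof (rule ccontr)
    assume gne: "gf z \<noteq> 0"
    define a where "a = (norm (gf z))^2"
    have a: "a > 0" using gne unfolding a_def by simp
    define t where "t = (f z - Inf (range f) + 1) / a"
    have "f (z + (- t) *\<^sub>R gf z)
        \<le> f z + gf z \<bullet> ((- t) *\<^sub>R gf z) + L / 2 * (norm ((- t) *\<^sub>R gf z))^2"
      by (rule L_smooth_upper_bound[OF smooth])
    also have "\<dots> \<le> f z - t * a"
      using L unfolding a_def by (simp add: power2_norm_eq_inner mult_nonpos_nonneg)
    also have "\<dots> = Inf (range f) - 1" unfolding t_def using a by simp
    finally show False using cInf_lower[OF _ bdd, of "f (z + (- t) *\<^sub>R gf z)"] by simp
  qed
  have decr: "f (z + h) \<le> f z" for z h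
    using L_smooth_upper_bound[OF smooth, of z h] grad0[of z]
      mult_nonpos_nonneg[OF L zero_le_power2[of "norm h"]]
    by simp
  show ?thesis using decr[of x "y - x"] decr[of y "x - y"] by simp
qed

lemma L_smooth_norm_gradient_sq_le:
  fixes f :: "real^'n \<Rightarrow> real"
  assumes smooth: "L_smooth L f gf" and bdd: "bdd_below (range f)" and L: "L > 0"
  shows "(norm (gf y))^2 \<le> 2 * L * (f y - Inf (range f))"
proof -
  let ?h = "(- (1/L)) *\<^sub>R gf y"
  have "Inf (range f) \<le> f (y + ?h)" using bdd by (simp add: cInf_lower)
  also have "\<dots> \<le> f y + gf y \<bullet> ?h + L / 2 * (norm ?h)^2"
    by (rule L_smooth_upper_bound[OF smooth])
  also have "\<dots> = f y - (norm (gf y))^2 / (2 * L)"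
  proof -
    have "gf y \<bullet> ?h = - ((norm (gf y))^2 / L)" by (simp add: power2_norm_eq_inner)
    moreover have "(norm ?h)^2 = (norm (gf y))^2 / L^2" by (simp add: power_divide)
    ultimately show ?thesis using L by (simp add: field_simps power2_eq_square)
  qed
  finally show ?thesis using L by (simp add: field_simps)
qed

section \<open>Step size and the perturbed descent recursion\<close>

lemma one_add_power_le_three:
  fixes c :: real assumes "0 \<le> c" "c * n \<le> 1"
  shows "(1 + c) ^ n \<le> 3"
proof -
  have "(1 + c) ^ n \<le> exp c ^ n"
    using assms by (intro power_mono) auto
  also have "\<dots> = exp (c * n)" by (metis exp_of_nat_mult mult.commute)
  also have "\<dots> \<le> exp 1" using assms by simp
  also have "\<dots> \<le> 3" by (rule exp_le)
  finally show ?thesis .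
qed

lemma dsgd_stepsize_conditions:
  fixes L \<Delta> d0 \<epsilon> \<gamma> :: real and T :: nat
  assumes L: "0 < L" and \<Delta>: "0 < \<Delta>" and d0: "0 \<le> d0" and \<epsilon>: "0 < \<epsilon>" and T: "0 < T"
    and T_bound: "real T \<ge> 12 * d0 * L^2 / \<epsilon>^4 * max (3 * d0) \<Delta>"
    and \<gamma>: "\<gamma> = min (1 / (L * sqrt T)) (\<epsilon>^2 / (2 * L^2 * \<Delta>))"
  shows "0 < \<gamma>" and "L^2 * \<gamma>^2 * T \<le> 1" and "L^2 * \<gamma>^2 * \<Delta> \<le> \<gamma> * \<epsilon>^2 / 2"
    and "6 * d0 \<le> \<gamma> * \<epsilon>^2 * T"
proof -
  have sT: "0 < sqrt T" using T by simp
  show \<gamma>_pos: "0 < \<gamma>" unfolding \<gamma> using L \<Delta> \<epsilon> sT by simp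
  have "\<gamma> \<le> 1 / (L * sqrt T)" unfolding \<gamma> by simp
  then have "\<gamma> * (L * sqrt T) \<le> 1" using L sT by (simp add: le_divide_eq)
  then have "(\<gamma> * (L * sqrt T))^2 \<le> 1"
    using \<gamma>_pos L sT by (simp add: power_le_one)
  then show "L^2 * \<gamma>^2 * T \<le> 1" by (simp add: power_mult_distrib algebra_simps)
  have "\<gamma> \<le> \<epsilon>^2 / (2 * L^2 * \<Delta>)" unfolding \<gamma> by simp
  then have "\<gamma> * (2 * L^2 * \<Delta>) \<le> \<epsilon>^2" using L \<Delta> by (simp add: le_divide_eq)
  then have "\<gamma> * (\<gamma> * (2 * L^2 * \<Delta>)) \<le> \<gamma> * \<epsilon>^2" using \<gamma>_pos by (intro mult_left_mono) auto
  then show "L^2 * \<gamma>^2 * \<Delta> \<le> \<gamma> * \<epsilon>^2 / 2" by (simp add: power2_eq_square algebra_simps)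
  have "0 < \<epsilon>^4" using \<epsilon> by simp
  then have T_bound': "12 * d0 * L^2 * max (3 * d0) \<Delta> \<le> \<epsilon>^4 * T"
    using T_bound by (simp add: field_simps)
  have d0L: "0 \<le> 12 * d0 * L^2" using d0 by simp
  show "6 * d0 \<le> \<gamma> * \<epsilon>^2 * T"
  proof (cases "1 / (L * sqrt T) \<le> \<epsilon>^2 / (2 * L^2 * \<Delta>)")
    case True
    have "36 * d0^2 * L^2 = 12 * d0 * L^2 * (3 * d0)" by algebra
    then have "36 * d0^2 * L^2 \<le> \<epsilon>^4 * T"
      using T_bound' mult_left_mono[OF max.cobounded1[of "3 * d0" \<Delta>] d0L] by linarith
    moreover have "(\<epsilon>^2 * sqrt T)^2 = \<epsilon>^4 * T" and "(6 * d0 * L)^2 = 36 * d0^2 * L^2"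
      by (simp_all add: power_mult_distrib flip: power_mult)
    ultimately have "(6 * d0 * L)^2 \<le> (\<epsilon>^2 * sqrt T)^2" by simp
    then have "6 * d0 * L \<le> \<epsilon>^2 * sqrt T"
      by (rule power2_le_imp_le) simp
    moreover have "\<gamma> * \<epsilon>^2 * T = \<epsilon>^2 * sqrt T / L"
    proof -
      have "\<gamma> * \<epsilon>^2 * T = \<epsilon>^2 * (sqrt T * sqrt T) / (L * sqrt T)"
        using True unfolding \<gamma> by simp
      also have "\<dots> = \<epsilon>^2 * sqrt T / L"
        using sT by (simp only: mult.assoc[symmetric]) (simp add: divide_simps)
      finally show ?thesis .
    qed
    ultimately show ?thesis using L by (simp add: le_divide_eq)
  next
    case False
    then have "\<gamma> * \<epsilon>^2 * T = \<epsilon>^4 * T / (2 * L^2 * \<Delta>)"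
      unfolding \<gamma> by (simp add: power4_eq_xxxx power2_eq_square)
    moreover have "6 * d0 * (2 * L^2 * \<Delta>) = 12 * d0 * L^2 * \<Delta>" by algebra
    then have "6 * d0 * (2 * L^2 * \<Delta>) \<le> \<epsilon>^4 * T"
      using T_bound' mult_left_mono[OF max.cobounded2 d0L, of \<Delta> "3 * d0"] by linarith
    ultimately show ?thesis using L \<Delta> by (simp add: le_divide_eq)
  qed
qed

lemma min_le_of_perturbed_descent:
  fixes R M :: "nat \<Rightarrow> ennreal" and \<gamma> c \<Delta> d0 e :: real
  assumes T: "0 < T" and R0: "R 0 = ennreal d0"
    and step: "\<And>t. t < T \<Longrightarrow> R (Suc t) + ennreal \<gamma> * M t \<le> ennreal (1 + c) * R t + ennreal (c * \<Delta>)"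
    and \<gamma>: "0 < \<gamma>" and c: "0 \<le> c" "c * T \<le> 1" and \<Delta>: "0 \<le> \<Delta>" and d0: "0 \<le> d0" and e: "0 \<le> e"
    and bias: "c * \<Delta> \<le> \<gamma> * e / 2" and horizon: "6 * d0 \<le> \<gamma> * e * T"
  shows "Min (M ` {..<T}) \<le> ennreal e"
proof (rule ccontr)
  \<comment> \<open>If every M t exceeded some \<open>\<mu> > e\<close>, each step would remove at least
      \<open>a = \<gamma> \<mu> - c \<Delta> > \<gamma> e / 2\<close> from R, while the factors \<open>1 + c\<close> inflate
      \<open>R 0\<close> by at most 3 within T steps.\<close>
  assume "\<not> ?thesis"
  then obtain z where z: "ennreal e < z" "z < Min (M ` {..<T})" using dense by (meson not_le)
  have "z < top" using z(2) top.not_eq_extremum by fastforce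
  define \<mu> where "\<mu> = enn2real z"
  have z_eq: "z = ennreal \<mu>" and \<mu>: "0 \<le> \<mu>" unfolding \<mu>_def using \<open>z < top\<close> by simp_all
  have "e < \<mu>" using z(1) e unfolding z_eq by (simp add: ennreal_less_iff)
  have M_ge: "ennreal \<mu> \<le> M t" if "t < T" for t
  proof -
    have "Min (M ` {..<T}) \<le> M t" using that by (intro Min_le) auto
    then show ?thesis using z(2) unfolding z_eq by simp
  qed
  define a where "a = \<gamma> * \<mu> - c * \<Delta>"
  have "\<gamma> * e < \<gamma> * \<mu>" using \<gamma> \<open>e < \<mu>\<close> by simp
  then have a: "\<gamma> * e / 2 < a" unfolding a_def using bias by linarith
  moreover have "0 \<le> \<gamma> * e / 2" using \<gamma> e by simp
  ultimately have a0: "0 \<le> a" by linarith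
  have cD: "0 \<le> c * \<Delta>" using c \<Delta> by simp
  have decrease: "R (Suc t) + ennreal a \<le> ennreal (1 + c) * R t" if "t < T" for t
  proof -
    have "ennreal \<gamma> * ennreal \<mu> = ennreal (\<gamma> * \<mu>)" using \<gamma> \<mu> by (simp add: ennreal_mult)
    also have "\<gamma> * \<mu> = a + c * \<Delta>" by (simp add: a_def)
    also have "ennreal (a + c * \<Delta>) = ennreal a + ennreal (c * \<Delta>)" using a0 cD by (rule ennreal_plus)
    finally have "R (Suc t) + ennreal a + ennreal (c * \<Delta>) = R (Suc t) + ennreal \<gamma> * ennreal \<mu>"
      by (simp add: add.assoc)
    also have "\<dots> \<le> R (Suc t) + ennreal \<gamma> * M t"
      by (intro add_left_mono mult_left_mono M_ge that) simp
    also have "\<dots> \<le> ennreal (1 + c) * R t + ennreal (c * \<Delta>)" by (rule step[OF that])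
    finally show ?thesis by simp
  qed
  have "R t + ennreal (a * t) \<le> ennreal ((1 + c)^t * d0)" if "t \<le> T" for t
    using that
  proof (induction t)
    case 0 then show ?case by (simp add: R0)
  next
    case (Suc t)
    have "a * Suc t \<le> a + (1 + c) * (a * t)" using a0 c by (simp add: algebra_simps)
    moreover have "ennreal (1 + c) * ennreal (a * t) = ennreal ((1 + c) * (a * t))"
      using a0 c by (intro ennreal_mult[symmetric]) auto
    moreover have "ennreal a + ennreal ((1 + c) * (a * t)) = ennreal (a + (1 + c) * (a * t))"
      using a0 c by (intro ennreal_plus[symmetric]) auto
    ultimately have "ennreal (a * Suc t) \<le> ennreal a + ennreal (1 + c) * ennreal (a * t)"
      by (simp add: ennreal_leI)
    then have "R (Suc t) + ennreal (a * Suc t) \<le> (R (Suc t) + ennreal a) + ennreal (1 + c) * ennreal (a * t)"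
      by (simp add: add.assoc add_left_mono)
    also have "\<dots> \<le> ennreal (1 + c) * R t + ennreal (1 + c) * ennreal (a * t)"
      using decrease[of t] Suc.prems by (intro add_right_mono) simp
    also have "\<dots> = ennreal (1 + c) * (R t + ennreal (a * t))" by (simp add: distrib_left)
    also have "\<dots> \<le> ennreal (1 + c) * ennreal ((1 + c)^t * d0)"
      using Suc by (intro mult_left_mono) auto
    also have "\<dots> = ennreal ((1 + c) * ((1 + c)^t * d0))"
      using c d0 by (intro ennreal_mult[symmetric]) auto
    also have "\<dots> = ennreal ((1 + c)^Suc t * d0)" by (simp add: mult.assoc)
    finally show ?case .
  qed
  then have "ennreal (a * T) \<le> ennreal ((1 + c)^T * d0)"
    using add_increasing[OF zero_le order_refl] order_trans by blast
  then have "a * T \<le> (1 + c)^T * d0" using c d0 by (simp add: ennreal_le_iff)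
  also have "\<dots> \<le> 3 * d0" using one_add_power_le_three[OF c] d0 by (rule mult_right_mono)
  moreover have "\<gamma> * e / 2 * T < a * T" using a T by (intro mult_strict_right_mono) auto
  ultimately show False using horizon by simp
qed

section \<open>Unbiased sketches\<close>

locale sketch_distribution = prob_space D for D :: "(real^'n^'n) measure" +
  assumes sets_D: "sets D = sets borel"
    and integrable_sketch: "integrable D (\<lambda>S. S)"
    and expectation_sketch: "(\<integral>S. S \<partial>D) = mat 1"
    and integrable_sketch_gram: "integrable D (\<lambda>S. transpose S ** S)"
    and sketch_bounded: "\<exists>L. AE S in D. lambda_max (transpose S ** S) \<le> L"
begin

lemma measurable_sketch: "(\<lambda>S. S) \<in> borel_measurable D"
  by (rule measurable_ident_sets[OF sets_D])

lemma AE_norm_sketch_sq_le: "AE S in D. \<forall>u. (norm (S *v u))^2 \<le> L_S_max D * (norm u)^2"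
  using AE_le_Inf_AE_bounds[OF sketch_bounded] unfolding L_S_max_def[symmetric]
proof (rule eventually_mono)
  fix S :: "real^'n^'n" assume "lambda_max (transpose S ** S) \<le> L_S_max D"
  then have "lambda_max (transpose S ** S) * (norm u)^2 \<le> L_S_max D * (norm u)^2" for u
    by (rule mult_right_mono) simp
  then show "\<forall>u. (norm (S *v u))^2 \<le> L_S_max D * (norm u)^2"
    using norm_matrix_vector_mult_sq_le order_trans by blast
qed

lemma integrable_sketch_apply: "integrable D (\<lambda>S. S *v u)"
  by (rule integrable_bounded_linear[OF bounded_linear_matrix_vector_mult_left integrable_sketch])

lemma expectation_sketch_apply: "(\<integral>S. S *v u \<partial>D) = u"
  using integral_bounded_linear[OF bounded_linear_matrix_vector_mult_left integrable_sketch, of u]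
  by (simp add: expectation_sketch)

lemma integrable_norm_sketch_sq: "integrable D (\<lambda>S. (norm (S *v u))^2)"
  using integrable_bounded_linear[OF bounded_linear_quadratic_form integrable_sketch_gram, of u]
  by (simp add: inner_transpose_mult_self)

lemma expectation_norm_sketch_sq_le: "(\<integral>S. (norm (S *v u))^2 \<partial>D) \<le> L_D D * (norm u)^2"
proof -
  let ?G = "\<integral>S. transpose S ** S \<partial>D"
  have "(\<integral>S. (norm (S *v u))^2 \<partial>D) = u \<bullet> (?G *v u)"
    using integral_bounded_linear[OF bounded_linear_quadratic_form integrable_sketch_gram, of u]
    by (simp add: inner_transpose_mult_self)
  moreover have "transpose ?G = ?G"
    using integral_bounded_linear[OF bounded_linear_transpose integrable_sketch_gram]
    by (simp add: transpose_mult_self_symmetric)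
  ultimately show ?thesis unfolding L_D_def by (simp add: inner_mult_le_lambda_max)
qed

text \<open>Jensen's inequality for the unbiased sketch, via 2 u\<bullet>Su \<le> |u|^2 + |Su|^2.\<close>
lemma norm_sq_le_expectation_norm_sketch_sq: "(norm u)^2 \<le> (\<integral>S. (norm (S *v u))^2 \<partial>D)"
proof -
  have pointwise: "u \<bullet> (S *v u) \<le> ((norm u)^2 + (norm (S *v u))^2) / 2" for S
  proof -
    have "0 \<le> (norm (S *v u - u))^2" by simp
    also have "\<dots> = (norm (S *v u))^2 - 2 * (u \<bullet> (S *v u)) + (norm u)^2"
      by (simp add: power2_norm_eq_inner inner_diff_left inner_diff_right inner_commute)
    finally show ?thesis by simp
  qed
  have "(norm u)^2 = u \<bullet> (\<integral>S. S *v u \<partial>D)" by (simp add: expectation_sketch_apply power2_norm_eq_inner)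
  also have "\<dots> = (\<integral>S. u \<bullet> (S *v u) \<partial>D)"
    using integrable_sketch_apply by (simp add: integral_inner_right)
  also have "\<dots> \<le> (\<integral>S. ((norm u)^2 + (norm (S *v u))^2) / 2 \<partial>D)"
    by (intro integral_mono pointwise integrable_inner_right integrable_sketch_apply
        integrable_divide Bochner_Integration.integrable_add integrable_const integrable_norm_sketch_sq)
  also have "\<dots> = ((norm u)^2 + (\<integral>S. (norm (S *v u))^2 \<partial>D)) / 2"
    using integrable_norm_sketch_sq by (simp add: prob_space)
  finally show ?thesis by simp
qed

lemma one_le_L_D: "1 \<le> L_D D"
  using norm_sq_le_expectation_norm_sketch_sq[of "axis undefined 1"]
    expectation_norm_sketch_sq_le[of "axis undefined 1"]
  by (simp add: norm_axis_1)

lemma one_le_L_S_max: "1 \<le> L_S_max D"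
proof -
  let ?u = "axis undefined 1 :: real^'n"
  have "1 \<le> (\<integral>S. (norm (S *v ?u))^2 \<partial>D)"
    using norm_sq_le_expectation_norm_sketch_sq[of ?u] by (simp add: norm_axis_1)
  also have "\<dots> \<le> (\<integral>S. L_S_max D \<partial>D)"
    using AE_norm_sketch_sq_le
    by (intro integral_mono_AE integrable_norm_sketch_sq integrable_const)
      (auto elim!: eventually_mono dest: spec[where x="?u"] simp: norm_axis_1)
  finally show ?thesis by (simp add: prob_space)
qed

end

sublocale sketch_distribution \<subseteq> sketches: product_prob_space "\<lambda>_::nat. D" UNIV
  using prob_space_axioms prob_space_imp_sigma_finite
  unfolding product_prob_space_def product_prob_space_axioms_def product_sigma_finite_def
  by blast

abbreviation (in sketch_distribution) sketch_sequences :: "(nat \<Rightarrow> real^'n^'n) measure"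
  where "sketch_sequences \<equiv> PiM UNIV (\<lambda>_. D)"

section \<open>The averaged function\<close>

locale dsgd_setting = sketch_distribution D for D :: "(real^'n^'n) measure" +
  fixes f :: "real^'n \<Rightarrow> real" and gf :: "real^'n \<Rightarrow> real^'n" and s :: "real^'n" and Lf :: real
  assumes smooth: "L_smooth Lf f gf"
    and bdd: "bdd_below (range f)"
    and Delta_pos: "Inf (range (f_tilde f s D)) - Inf (range f) > 0"
begin

abbreviation "f_inf \<equiv> Inf (range f)"
abbreviation "ft \<equiv> f_tilde f s D"
abbreviation "ft_inf \<equiv> Inf (range ft)"

definition sketched_point :: "real^'n^'n \<Rightarrow> real^'n \<Rightarrow> real^'n"
  where "sketched_point S x = s + S *v (x - s)"

definition sketched_grad :: "real^'n \<Rightarrow> real^'n^'n \<Rightarrow> real^'n"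
  where "sketched_grad x S = transpose S *v gf (sketched_point S x)"

definition tilde_grad :: "real^'n \<Rightarrow> real^'n"
  where "tilde_grad x = (\<integral>S. sketched_grad x S \<partial>D)"

definition bounded_sketch :: "real^'n^'n \<Rightarrow> bool"
  where "bounded_sketch S \<longleftrightarrow> (\<forall>u. (norm (S *v u))^2 \<le> L_S_max D * (norm u)^2)"

lemma AE_bounded_sketch: "AE S in D. bounded_sketch S"
  using AE_norm_sketch_sq_le unfolding bounded_sketch_def .

lemma f_tilde_eq: "ft x = (\<integral>S. f (sketched_point S x) \<partial>D)"
  unfolding f_tilde_def f_sketch_def sketched_point_def ..

lemma f_inf_le: "f_inf \<le> f y"
  using bdd by (simp add: cInf_lower)

lemma Lf_pos: "0 < Lf"
proof (rule ccontr)
  assume "\<not> 0 < Lf"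
  then have const: "f y = f x" for x y
    using L_smooth_nonpos_constant[OF smooth bdd] by simp
  then have "ft x = f s" for x
  proof -
    have "(\<lambda>S. f (s + S *v (x - s))) = (\<lambda>_. f s)" using const by blast
    then show ?thesis unfolding f_tilde_def f_sketch_def by (simp add: prob_space)
  qed
  moreover have "range f = {f s}" using const[of _ s] by auto
  ultimately show False using Delta_pos by simp
qed

lemma norm_sketched_grad_sq_le:
  "bounded_sketch S \<Longrightarrow> (norm (sketched_grad x S))^2 \<le> L_S_max D * (2 * Lf * (f (sketched_point S x) - f_inf))"
proof -
  assume "bounded_sketch S"
  then have "norm (sketched_grad x S) \<le> sqrt (L_S_max D) * norm (gf (sketched_point S x))"
    unfolding sketched_grad_def bounded_sketch_def by (intro norm_transpose_matrix_vector_mult_le) blast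
  then have "(norm (sketched_grad x S))^2 \<le> (sqrt (L_S_max D) * norm (gf (sketched_point S x)))^2"
    by (rule power_mono) simp
  also have "\<dots> = L_S_max D * (norm (gf (sketched_point S x)))^2"
    using one_le_L_S_max by (simp add: power_mult_distrib)
  also have "\<dots> \<le> L_S_max D * (2 * Lf * (f (sketched_point S x) - f_inf))"
    using one_le_L_S_max L_smooth_norm_gradient_sq_le[OF smooth bdd Lf_pos]
    by (intro mult_left_mono) auto
  finally show ?thesis .
qed

text \<open>Bounds on the sketched value and gradient, uniform in S and monotone in \<open>|x - s|\<close>;
  they provide the integrable majorants below.\<close>
definition value_bound :: "real \<Rightarrow> real"
  where "value_bound R = f s + norm (gf s) * (sqrt (L_S_max D) * R) + Lf / 2 * (L_S_max D * R^2)"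

definition grad_bound :: "real \<Rightarrow> real"
  where "grad_bound R = sqrt (L_S_max D * (2 * Lf * (value_bound R - f_inf)))"

lemma grad_bound_mono: "0 \<le> R \<Longrightarrow> R \<le> R' \<Longrightarrow> grad_bound R \<le> grad_bound R'"
  unfolding grad_bound_def value_bound_def using Lf_pos one_le_L_S_max
  by (intro real_sqrt_le_mono mult_left_mono diff_right_mono add_mono power_mono) auto

lemma f_sketched_le_value_bound:
  assumes S: "bounded_sketch S" shows "f (sketched_point S x) \<le> value_bound (norm (x - s))"
proof -
  let ?h = "S *v (x - s)"
  have h: "(norm ?h)^2 \<le> L_S_max D * (norm (x - s))^2" using S unfolding bounded_sketch_def by blast
  then have "norm ?h \<le> sqrt (L_S_max D) * norm (x - s)"
    using real_sqrt_le_mono[OF h] by (simp add: real_sqrt_mult)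
  then have "gf s \<bullet> ?h \<le> norm (gf s) * (sqrt (L_S_max D) * norm (x - s))"
    using norm_cauchy_schwarz[of "gf s" ?h] by (meson mult_left_mono norm_ge_zero order_trans)
  moreover have "f (sketched_point S x) \<le> f s + gf s \<bullet> ?h + Lf / 2 * (norm ?h)^2"
    unfolding sketched_point_def by (rule L_smooth_upper_bound[OF smooth])
  moreover have "Lf / 2 * (norm ?h)^2 \<le> Lf / 2 * (L_S_max D * (norm (x - s))^2)"
    using h Lf_pos by (intro mult_left_mono) auto
  ultimately show ?thesis unfolding value_bound_def by linarith
qed

lemma norm_sketched_grad_le_grad_bound:
  assumes S: "bounded_sketch S" shows "norm (sketched_grad x S) \<le> grad_bound (norm (x - s))"
proof -
  have "(norm (sketched_grad x S))^2 \<le> L_S_max D * (2 * Lf * (f (sketched_point S x) - f_inf))"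
    by (rule norm_sketched_grad_sq_le[OF S])
  also have "\<dots> \<le> L_S_max D * (2 * Lf * (value_bound (norm (x - s)) - f_inf))"
    using f_sketched_le_value_bound[OF S, of x] one_le_L_S_max Lf_pos
    by (intro mult_left_mono) auto
  finally show ?thesis unfolding grad_bound_def by (rule real_le_rsqrt)
qed

lemma measurable_gf: "gf \<in> borel_measurable borel"
  using borel_measurable_gradient L_smooth_gradient[OF smooth] by blast

lemma measurable_f: "f \<in> borel_measurable borel"
  using L_smooth_gradient[OF smooth] has_derivative_continuous
  by (intro borel_measurable_continuous_onI continuous_at_imp_continuous_on) blast

lemma measurable_sketched_point:
  "A \<in> borel_measurable M \<Longrightarrow> a \<in> borel_measurable M \<Longrightarrow>
   (\<lambda>w. sketched_point (A w) (a w)) \<in> borel_measurable M"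
  unfolding sketched_point_def
  by (intro borel_measurable_add borel_measurable_const borel_measurable_matrix_vector_mult
      borel_measurable_diff)

lemma measurable_sketched_grad:
  "A \<in> borel_measurable M \<Longrightarrow> a \<in> borel_measurable M \<Longrightarrow>
   (\<lambda>w. sketched_grad (a w) (A w)) \<in> borel_measurable M"
  unfolding sketched_grad_def
  by (intro borel_measurable_matrix_vector_mult borel_measurable_transpose
      measurable_compose[OF measurable_sketched_point measurable_gf])

lemma integrable_f_sketched: "integrable D (\<lambda>S. f (sketched_point S x))"
proof (rule integrable_const_bound[where B="max \<bar>f_inf\<bar> \<bar>value_bound (norm (x - s))\<bar>"])
  show "AE S in D. norm (f (sketched_point S x)) \<le> max \<bar>f_inf\<bar> \<bar>value_bound (norm (x - s))\<bar>"
    using AE_bounded_sketch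
  proof (rule eventually_mono)
    fix S assume "bounded_sketch S"
    then show "norm (f (sketched_point S x)) \<le> max \<bar>f_inf\<bar> \<bar>value_bound (norm (x - s))\<bar>"
      using f_sketched_le_value_bound[of S x] f_inf_le[of "sketched_point S x"] by auto
  qed
  show "(\<lambda>S. f (sketched_point S x)) \<in> borel_measurable D"
    by (intro measurable_compose[OF measurable_sketched_point measurable_f]
        measurable_sketch borel_measurable_const)
qed

lemma measurable_sketched_grad_D: "sketched_grad x \<in> borel_measurable D"
  using measurable_sketched_grad[OF measurable_sketch borel_measurable_const] by simp

lemma integrable_sketched_grad: "integrable D (sketched_grad x)"
  using AE_bounded_sketch
  by (intro integrable_const_bound[where B="grad_bound (norm (x - s))"] measurable_sketched_grad_D)
     (auto elim!: eventually_mono intro: norm_sketched_grad_le_grad_bound)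

lemma integrable_norm_sketched_grad_sq: "integrable D (\<lambda>S. (norm (sketched_grad x S))^2)"
proof (rule integrable_const_bound[where B="(grad_bound (norm (x - s)))^2"])
  show "AE S in D. norm ((norm (sketched_grad x S))^2) \<le> (grad_bound (norm (x - s)))^2"
    using AE_bounded_sketch
    by (rule eventually_mono) (auto intro!: power_mono norm_sketched_grad_le_grad_bound)
  show "(\<lambda>S. (norm (sketched_grad x S))^2) \<in> borel_measurable D"
    using measurable_sketched_grad_D by measurable
qed

lemma sketched_point_add: "sketched_point S (x + h) = sketched_point S x + S *v h"
  unfolding sketched_point_def by (simp add: matrix_vector_right_distrib algebra_simps)

lemma inner_sketched_grad: "gf (sketched_point S x) \<bullet> (S *v h) = sketched_grad x S \<bullet> h"
  unfolding sketched_grad_def by (rule inner_matrix_vector_mult_transpose)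

lemma f_sketched_upper_bound:
  "f (sketched_point S (x + h))
     \<le> f (sketched_point S x) + sketched_grad x S \<bullet> h + Lf / 2 * (norm (S *v h))^2"
  using L_smooth_upper_bound[OF smooth, of "sketched_point S x" "S *v h"]
  unfolding sketched_point_add inner_sketched_grad .

lemma f_tilde_upper_bound: "ft (x + h) \<le> ft x + tilde_grad x \<bullet> h + Lf * L_D D / 2 * (norm h)^2"
proof -
  have "ft (x + h) \<le> (\<integral>S. f (sketched_point S x) + sketched_grad x S \<bullet> h + Lf / 2 * (norm (S *v h))^2 \<partial>D)"
    unfolding f_tilde_eq
    by (intro integral_mono f_sketched_upper_bound integrable_f_sketched Bochner_Integration.integrable_add
        integrable_inner_left integrable_sketched_grad integrable_mult_right integrable_norm_sketch_sq)
  also have "\<dots> = ft x + tilde_grad x \<bullet> h + Lf / 2 * (\<integral>S. (norm (S *v h))^2 \<partial>D)"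
    using integrable_f_sketched integrable_sketched_grad integrable_norm_sketch_sq
    by (simp add: f_tilde_eq tilde_grad_def integral_inner_left Bochner_Integration.integrable_add
        integrable_inner_left)
  also have "\<dots> \<le> ft x + tilde_grad x \<bullet> h + Lf / 2 * (L_D D * (norm h)^2)"
    using expectation_norm_sketch_sq_le[of h] Lf_pos by (intro add_left_mono mult_left_mono) auto
  finally show ?thesis by simp
qed


lemma has_derivative_f_sketched:
  "((\<lambda>z. f (sketched_point S z)) has_derivative (\<lambda>h. sketched_grad x S \<bullet> h)) (at x)"
proof -
  have "((\<lambda>z. z - s) has_derivative (\<lambda>h. h)) (at x)" by (intro derivative_eq_intros) auto
  then have "((\<lambda>z. S *v (z - s)) has_derivative (\<lambda>h. S *v h)) (at x)"
    by (rule bounded_linear.has_derivative[OF matrix_vector_mul_bounded_linear])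
  then have "(sketched_point S has_derivative (\<lambda>h. 0 + S *v h)) (at x)"
    unfolding sketched_point_def by (intro has_derivative_add has_derivative_const)
  then have "(sketched_point S has_derivative (\<lambda>h. S *v h)) (at x)" by simp
  from has_derivative_compose[OF this L_smooth_gradient[OF smooth]]
  show ?thesis unfolding inner_sketched_grad .
qed

text \<open>The two-sided smoothness bound makes the difference quotients of the sketched function
  locally uniformly bounded, which licenses dominated convergence.\<close>
lemma difference_quotient_f_sketched_le:
  assumes S: "bounded_sketch S" and z: "z \<noteq> x"
  shows "\<bar>(f (sketched_point S z) - f (sketched_point S x) - sketched_grad x S \<bullet> (z - x)) / norm (z - x)\<bar>
          \<le> norm (sketched_grad z S) + norm (sketched_grad x S) + Lf * L_S_max D / 2 * norm (z - x)"
proof -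
  define d where "d = z - x"
  have dn: "norm d > 0" using z unfolding d_def by simp
  have curv: "Lf / 2 * (norm (S *v v))^2 \<le> Lf / 2 * (L_S_max D * (norm d)^2)" if "norm v = norm d" for v
    using S Lf_pos that unfolding bounded_sketch_def by (intro mult_left_mono) (metis, simp)
  have up: "f (sketched_point S z) - f (sketched_point S x) - sketched_grad x S \<bullet> d
      \<le> Lf / 2 * (L_S_max D * (norm d)^2)"
  proof -
    have "x + d = z" unfolding d_def by simp
    then show ?thesis using f_sketched_upper_bound[of S x d] curv[of d] by simp
  qed
  have lo: "sketched_grad z S \<bullet> d - sketched_grad x S \<bullet> d - Lf / 2 * (L_S_max D * (norm d)^2)
      \<le> f (sketched_point S z) - f (sketched_point S x) - sketched_grad x S \<bullet> d"
  proof -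
    have "z + - d = x" unfolding d_def by simp
    then show ?thesis using f_sketched_upper_bound[of S z "- d"] curv[of "- d"] by simp
  qed
  have "\<bar>f (sketched_point S z) - f (sketched_point S x) - sketched_grad x S \<bullet> d\<bar>
      \<le> (norm (sketched_grad z S) + norm (sketched_grad x S) + Lf * L_S_max D / 2 * norm d) * norm d"
    using up lo Cauchy_Schwarz_ineq2[of "sketched_grad z S" d] Cauchy_Schwarz_ineq2[of "sketched_grad x S" d]
      Lf_pos one_le_L_S_max
    by (simp add: algebra_simps power2_eq_square abs_le_iff)
  then show ?thesis using dn unfolding d_def[symmetric] abs_divide abs_norm_cancel
    by (simp add: divide_le_eq)
qed

lemma has_derivative_f_tilde: "(ft has_derivative (\<lambda>h. tilde_grad x \<bullet> h)) (at x)"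
  unfolding has_derivative_iff_norm
proof (intro conjI bounded_linear_inner_right)
  show "((\<lambda>y. norm (ft y - ft x - tilde_grad x \<bullet> (y - x)) / norm (y - x)) \<longlongrightarrow> 0) (at x)"
    unfolding tendsto_at_iff_sequentially
  proof (intro allI impI)
    fix X :: "nat \<Rightarrow> real^'n" assume Xne: "\<forall>i. X i \<in> UNIV - {x}" and Xl: "X \<longlonglongrightarrow> x"
    define Q where "Q m S = (f (sketched_point S (X m)) - f (sketched_point S x)
      - sketched_grad x S \<bullet> (X m - x)) / norm (X m - x)" for m S
    obtain K where K: "K > 0" "\<And>m. norm (X m) \<le> K"
      using convergent_imp_Bseq[OF convergentI[OF Xl]] by (auto simp: Bseq_def)
    define W where "W = grad_bound (K + norm s) + grad_bound (norm (x - s)) + Lf * L_S_max D / 2 * (K + norm x)"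
    have "Q m \<in> borel_measurable D" for m
      unfolding Q_def
      by (intro borel_measurable_divide borel_measurable_diff borel_measurable_inner borel_measurable_const
          measurable_compose[OF measurable_sketched_point measurable_f] measurable_sketch measurable_sketched_grad_D)
    moreover have "(\<lambda>m. Q m S) \<longlonglongrightarrow> 0" for S
    proof -
      have "((\<lambda>y. norm (f (sketched_point S y) - f (sketched_point S x) - sketched_grad x S \<bullet> (y - x))
          / norm (y - x)) \<circ> X) \<longlonglongrightarrow> 0"
        using has_derivative_f_sketched[of S x] Xne Xl
        unfolding has_derivative_iff_norm tendsto_at_iff_sequentially by blast
      then have "(\<lambda>m. \<bar>Q m S\<bar>) \<longlonglongrightarrow> 0" unfolding Q_def comp_def by (simp add: abs_div_pos)
      then show ?thesis by (simp add: tendsto_rabs_zero_iff)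
    qed
    moreover have "AE S in D. norm (Q m S) \<le> W" for m
      using AE_bounded_sketch
    proof (rule eventually_mono)
      fix S assume S: "bounded_sketch S"
      have Xs: "norm (X m - s) \<le> K + norm s" and Xx: "norm (X m - x) \<le> K + norm x"
        using K(2)[of m] norm_triangle_ineq4[of "X m"] by (meson add_right_mono order_trans)+
      have "norm (Q m S) \<le> norm (sketched_grad (X m) S) + norm (sketched_grad x S)
          + Lf * L_S_max D / 2 * norm (X m - x)"
        unfolding Q_def real_norm_def using Xne by (intro difference_quotient_f_sketched_le[OF S]) auto
      also have "\<dots> \<le> W" unfolding W_def
        using norm_sketched_grad_le_grad_bound[OF S, of "X m"] grad_bound_mono[OF _ Xs]
          norm_sketched_grad_le_grad_bound[OF S, of x] Xx Lf_pos one_le_L_S_max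
        by (intro add_mono mult_left_mono) auto
      finally show "norm (Q m S) \<le> W" .
    qed
    ultimately have "(\<lambda>m. \<integral>S. Q m S \<partial>D) \<longlonglongrightarrow> (\<integral>S. 0 \<partial>D)"
      by (intro integral_dominated_convergence[where w="\<lambda>_. W"]) auto
    moreover have "(\<integral>S. Q m S \<partial>D) = (ft (X m) - ft x - tilde_grad x \<bullet> (X m - x)) / norm (X m - x)" for m
      unfolding Q_def f_tilde_eq tilde_grad_def
      using integrable_f_sketched integrable_sketched_grad
      by (simp add: integral_inner_left Bochner_Integration.integral_diff
          Bochner_Integration.integrable_diff integrable_inner_left)
    ultimately have "(\<lambda>m. (ft (X m) - ft x - tilde_grad x \<bullet> (X m - x)) / norm (X m - x)) \<longlonglongrightarrow> 0"
      by simp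
    then show "((\<lambda>y. norm (ft y - ft x - tilde_grad x \<bullet> (y - x)) / norm (y - x)) \<circ> X) \<longlonglongrightarrow> 0"
      unfolding comp_def real_norm_def using tendsto_rabs_zero by (fastforce simp: abs_div_pos)
  qed
qed

lemma grad_f_tilde: "grad ft x = tilde_grad x"
  unfolding grad_def
proof (rule the_equality)
  show "(ft has_derivative (\<lambda>h. tilde_grad x \<bullet> h)) (at x)" by (rule has_derivative_f_tilde)
  fix g assume "(ft has_derivative (\<lambda>h. g \<bullet> h)) (at x)"
  then have "(\<lambda>h. g \<bullet> h) = (\<lambda>h. tilde_grad x \<bullet> h)"
    using has_derivative_f_tilde has_derivative_unique by blast
  then have "g \<bullet> (g - tilde_grad x) = tilde_grad x \<bullet> (g - tilde_grad x)" by metis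
  then have "(g - tilde_grad x) \<bullet> (g - tilde_grad x) = 0" by (simp add: inner_diff_left)
  then show "g = tilde_grad x" by simp
qed

lemma f_inf_le_f_tilde: "f_inf \<le> ft x"
proof -
  have "(\<integral>S. f_inf \<partial>D) \<le> (\<integral>S. f (sketched_point S x) \<partial>D)"
    by (intro integral_mono integrable_f_sketched integrable_const f_inf_le)
  then show ?thesis by (simp add: f_tilde_eq prob_space)
qed

lemma ft_inf_le: "ft_inf \<le> ft x"
proof (rule cInf_lower)
  show "bdd_below (range ft)" using f_inf_le_f_tilde by (intro bdd_belowI[of _ f_inf]) auto
qed simp

lemma expectation_norm_sketched_grad_sq_le:
  "(\<integral>S. (norm (sketched_grad x S))^2 \<partial>D) \<le> 2 * Lf * L_S_max D * (ft x - f_inf)"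
proof -
  have "(\<integral>S. (norm (sketched_grad x S))^2 \<partial>D)
      \<le> (\<integral>S. L_S_max D * (2 * Lf * (f (sketched_point S x) - f_inf)) \<partial>D)"
    using AE_bounded_sketch
    by (intro integral_mono_AE integrable_norm_sketched_grad_sq integrable_mult_right
        Bochner_Integration.integrable_diff integrable_f_sketched integrable_const)
      (auto elim!: eventually_mono intro: norm_sketched_grad_sq_le)
  also have "\<dots> = 2 * Lf * L_S_max D * (ft x - f_inf)"
    using integrable_f_sketched by (simp add: f_tilde_eq prob_space Bochner_Integration.integral_diff)
  finally show ?thesis .
qed

lemma expected_descent:
  assumes \<gamma>: "0 \<le> \<gamma>"
  defines "c \<equiv> (Lf * L_D D) * (Lf * L_S_max D) * \<gamma>^2"
  shows "(\<integral>\<^sup>+S. ennreal (ft (x - \<gamma> *\<^sub>R sketched_grad x S) - ft_inf) \<partial>D) + ennreal (\<gamma> * (norm (tilde_grad x))^2)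
         \<le> ennreal ((1 + c) * (ft x - ft_inf) + c * (ft_inf - f_inf))"
proof -
  define B where "B S = ft x - \<gamma> * (tilde_grad x \<bullet> sketched_grad x S)
      + Lf * L_D D / 2 * \<gamma>^2 * (norm (sketched_grad x S))^2 - ft_inf" for S
  have pointwise: "ft (x - \<gamma> *\<^sub>R sketched_grad x S) - ft_inf \<le> B S" for S
    using f_tilde_upper_bound[of x "- \<gamma> *\<^sub>R sketched_grad x S"]
    unfolding B_def by (simp add: power_mult_distrib)
  have B_nonneg: "0 \<le> B S" for S
    using pointwise[of S] ft_inf_le[of "x - \<gamma> *\<^sub>R sketched_grad x S"] by linarith
  have integrable_B: "integrable D B"
    unfolding B_def
    by (intro Bochner_Integration.integrable_diff Bochner_Integration.integrable_add
        integrable_const integrable_mult_right integrable_inner_right integrable_sketched_grad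
        integrable_norm_sketched_grad_sq)
  have "(\<integral>S. B S \<partial>D) = ft x - \<gamma> * (norm (tilde_grad x))^2
      + Lf * L_D D / 2 * \<gamma>^2 * (\<integral>S. (norm (sketched_grad x S))^2 \<partial>D) - ft_inf"
    unfolding B_def using integrable_sketched_grad integrable_norm_sketched_grad_sq
    by (simp add: Bochner_Integration.integral_diff Bochner_Integration.integral_add
        Bochner_Integration.integrable_diff Bochner_Integration.integrable_add integrable_mult_right
        integrable_inner_right integral_inner_right tilde_grad_def[symmetric] prob_space
        power2_norm_eq_inner)
  also have "\<dots> \<le> ft x - \<gamma> * (norm (tilde_grad x))^2
      + Lf * L_D D / 2 * \<gamma>^2 * (2 * Lf * L_S_max D * (ft x - f_inf)) - ft_inf"
    using expectation_norm_sketched_grad_sq_le[of x] Lf_pos one_le_L_D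
    by (intro diff_right_mono add_left_mono mult_left_mono) auto
  also have "\<dots> = (1 + c) * (ft x - ft_inf) + c * (ft_inf - f_inf) - \<gamma> * (norm (tilde_grad x))^2"
    unfolding c_def by (simp add: algebra_simps)
  finally have integral_B: "(\<integral>S. B S \<partial>D) \<le> \<dots>" .
  have "(\<integral>\<^sup>+S. ennreal (ft (x - \<gamma> *\<^sub>R sketched_grad x S) - ft_inf) \<partial>D) \<le> (\<integral>\<^sup>+S. ennreal (B S) \<partial>D)"
    by (intro nn_integral_mono ennreal_leI pointwise)
  also have "\<dots> = ennreal (\<integral>S. B S \<partial>D)"
    by (rule nn_integral_eq_integral[OF integrable_B]) (simp add: B_nonneg)
  finally have "(\<integral>\<^sup>+S. ennreal (ft (x - \<gamma> *\<^sub>R sketched_grad x S) - ft_inf) \<partial>D) + ennreal (\<gamma> * (norm (tilde_grad x))^2)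
      \<le> ennreal (\<integral>S. B S \<partial>D) + ennreal (\<gamma> * (norm (tilde_grad x))^2)"
    by (rule add_right_mono)
  also have "\<dots> = ennreal ((\<integral>S. B S \<partial>D) + \<gamma> * (norm (tilde_grad x))^2)"
    using \<gamma> B_nonneg by (intro ennreal_plus[symmetric] integral_nonneg) auto
  also have "\<dots> \<le> ennreal ((1 + c) * (ft x - ft_inf) + c * (ft_inf - f_inf))"
    using integral_B by (intro ennreal_leI) simp
  finally show ?thesis .
qed

lemma measurable_f_tilde: "ft \<in> borel_measurable borel"
  using has_derivative_f_tilde has_derivative_continuous
  by (intro borel_measurable_continuous_onI continuous_at_imp_continuous_on) blast

lemma measurable_tilde_grad: "tilde_grad \<in> borel_measurable borel"
  by (rule borel_measurable_gradient[OF has_derivative_f_tilde])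

section \<open>Iterates on the sequence space of sketches\<close>

lemma dsgd_Suc_sketched_grad:
  "dsgd gf s \<gamma> x0 \<omega> (Suc t) = dsgd gf s \<gamma> x0 \<omega> t - \<gamma> *\<^sub>R sketched_grad (dsgd gf s \<gamma> x0 \<omega> t) (\<omega> t)"
  by (simp add: sketched_grad_def sketched_point_def)

lemma dsgd_cong: "(\<And>i. i < t \<Longrightarrow> \<omega> i = \<omega>' i) \<Longrightarrow> dsgd gf s \<gamma> x0 \<omega> t = dsgd gf s \<gamma> x0 \<omega>' t"
  by (induction t) (simp_all del: dsgd.simps add: dsgd_Suc_sketched_grad dsgd.simps(1))

lemma measurable_dsgd:
  "{..<t} \<subseteq> I \<Longrightarrow> (\<lambda>\<omega>. dsgd gf s \<gamma> x0 \<omega> t) \<in> borel_measurable (PiM I (\<lambda>_. D))"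
proof (induction t)
  case (Suc t)
  then have "t \<in> I" by auto
  from measurable_compose[OF measurable_component_singleton[OF this] measurable_sketch]
  have "(\<lambda>\<omega>. \<omega> t) \<in> borel_measurable (PiM I (\<lambda>_. D))" .
  moreover have "{..<t} \<subseteq> I" using Suc.prems by auto
  then have "(\<lambda>\<omega>. dsgd gf s \<gamma> x0 \<omega> t) \<in> borel_measurable (PiM I (\<lambda>_. D))"
    by (rule Suc.IH)
  ultimately show ?case unfolding dsgd_Suc_sketched_grad
    by (intro borel_measurable_diff borel_measurable_scaleR borel_measurable_const
        measurable_sketched_grad)
qed simp

text \<open>The t-th iterate depends only on the first t sketches, so expectations over the infinite
  product reduce to finite products.\<close>
lemma nn_integral_dsgd_finite_product:
  assumes J: "finite J" "{..<t} \<subseteq> J" and F: "F \<in> borel_measurable borel"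
  shows "(\<integral>\<^sup>+\<omega>. F (dsgd gf s \<gamma> x0 \<omega> t) \<partial>sketch_sequences)
       = (\<integral>\<^sup>+\<omega>. F (dsgd gf s \<gamma> x0 \<omega> t) \<partial>PiM J (\<lambda>_. D))"
proof -
  have "(\<integral>\<^sup>+\<omega>. F (dsgd gf s \<gamma> x0 \<omega> t) \<partial>PiM J (\<lambda>_. D))
      = (\<integral>\<^sup>+\<omega>. F (dsgd gf s \<gamma> x0 \<omega> t) \<partial>distr sketch_sequences (PiM J (\<lambda>_. D)) (\<lambda>\<omega>. restrict \<omega> J))"
    using sketches.distr_PiM_restrict_finite[OF J(1)] by simp
  also have "\<dots> = (\<integral>\<^sup>+\<omega>. F (dsgd gf s \<gamma> x0 (restrict \<omega> J) t) \<partial>sketch_sequences)"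
    using measurable_compose[OF measurable_dsgd[OF J(2)] F]
    by (intro nn_integral_distr measurable_restrict_subset) auto
  also have "\<dots> = (\<integral>\<^sup>+\<omega>. F (dsgd gf s \<gamma> x0 \<omega> t) \<partial>sketch_sequences)"
    using J(2) by (intro nn_integral_cong arg_cong[where f=F] dsgd_cong) auto
  finally show ?thesis by simp
qed

lemma measurable_expected_step:
  assumes h: "h \<in> borel_measurable borel"
  shows "(\<lambda>z. \<integral>\<^sup>+S. h (z - \<gamma> *\<^sub>R sketched_grad z S) \<partial>D) \<in> borel_measurable borel"
proof -
  have "(\<lambda>p. h (fst p - \<gamma> *\<^sub>R sketched_grad (fst p) (snd p))) \<in> borel_measurable (borel \<Otimes>\<^sub>M D)"
    using measurable_compose[OF measurable_snd measurable_sketch]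
    by (intro measurable_compose[OF _ h] borel_measurable_diff borel_measurable_scaleR
        borel_measurable_const measurable_sketched_grad measurable_fst)
  then show ?thesis
    using borel_measurable_nn_integral[of "\<lambda>z S. h (z - \<gamma> *\<^sub>R sketched_grad z S)" borel]
    by (simp add: case_prod_beta')
qed

text \<open>Tower property: the new sketch is independent of the current iterate.\<close>
lemma nn_integral_dsgd_Suc:
  assumes h: "h \<in> borel_measurable borel"
  shows "(\<integral>\<^sup>+\<omega>. h (dsgd gf s \<gamma> x0 \<omega> (Suc t)) \<partial>sketch_sequences)
       = (\<integral>\<^sup>+\<omega>. (\<integral>\<^sup>+S. h (dsgd gf s \<gamma> x0 \<omega> t - \<gamma> *\<^sub>R sketched_grad (dsgd gf s \<gamma> x0 \<omega> t) S) \<partial>D)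
            \<partial>sketch_sequences)"
proof -
  define \<Phi> where "\<Phi> z = (\<integral>\<^sup>+S. h (z - \<gamma> *\<^sub>R sketched_grad z S) \<partial>D)" for z
  have "(\<integral>\<^sup>+\<omega>. h (dsgd gf s \<gamma> x0 \<omega> (Suc t)) \<partial>sketch_sequences)
      = (\<integral>\<^sup>+\<omega>. h (dsgd gf s \<gamma> x0 \<omega> (Suc t)) \<partial>PiM (insert t {..<t}) (\<lambda>_. D))"
    using h by (intro nn_integral_dsgd_finite_product) auto
  also have "\<dots> = (\<integral>\<^sup>+y. (\<integral>\<^sup>+S. h (dsgd gf s \<gamma> x0 (y(t := S)) (Suc t)) \<partial>D) \<partial>PiM {..<t} (\<lambda>_. D))"
    by (rule sketches.product_nn_integral_insert[OF _ _ measurable_compose[OF measurable_dsgd h]]) auto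
  also have "\<dots> = (\<integral>\<^sup>+y. \<Phi> (dsgd gf s \<gamma> x0 y t) \<partial>PiM {..<t} (\<lambda>_. D))"
  proof (rule nn_integral_cong)
    fix y
    have "dsgd gf s \<gamma> x0 (y(t := S)) t = dsgd gf s \<gamma> x0 y t" for S
      by (rule dsgd_cong) auto
    then show "(\<integral>\<^sup>+S. h (dsgd gf s \<gamma> x0 (y(t := S)) (Suc t)) \<partial>D) = \<Phi> (dsgd gf s \<gamma> x0 y t)"
      unfolding \<Phi>_def dsgd_Suc_sketched_grad by simp
  qed
  also have "\<dots> = (\<integral>\<^sup>+\<omega>. \<Phi> (dsgd gf s \<gamma> x0 \<omega> t) \<partial>sketch_sequences)"
    using measurable_expected_step[OF h, of \<gamma>] unfolding \<Phi>_def[symmetric]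
    by (intro nn_integral_dsgd_finite_product[symmetric]) auto
  finally show ?thesis unfolding \<Phi>_def .
qed

lemma expected_recursion:
  assumes \<gamma>: "0 \<le> \<gamma>"
  defines "c \<equiv> (Lf * L_D D) * (Lf * L_S_max D) * \<gamma>^2"
  shows "(\<integral>\<^sup>+\<omega>. ennreal (ft (dsgd gf s \<gamma> x0 \<omega> (Suc t)) - ft_inf) \<partial>sketch_sequences)
          + ennreal \<gamma> * (\<integral>\<^sup>+\<omega>. ennreal ((norm (tilde_grad (dsgd gf s \<gamma> x0 \<omega> t)))^2) \<partial>sketch_sequences)
         \<le> ennreal (1 + c) * (\<integral>\<^sup>+\<omega>. ennreal (ft (dsgd gf s \<gamma> x0 \<omega> t) - ft_inf) \<partial>sketch_sequences)
           + ennreal (c * (ft_inf - f_inf))"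
proof -
  let ?x = "\<lambda>\<omega>. dsgd gf s \<gamma> x0 \<omega> t"
  define h where "h z = ennreal (ft z - ft_inf)" for z
  define \<Phi> where "\<Phi> z = (\<integral>\<^sup>+S. h (z - \<gamma> *\<^sub>R sketched_grad z S) \<partial>D)" for z
  have h: "h \<in> borel_measurable borel" unfolding h_def using measurable_f_tilde by measurable
  have x: "?x \<in> borel_measurable sketch_sequences" by (rule measurable_dsgd) simp
  have \<Phi>x: "(\<lambda>\<omega>. \<Phi> (?x \<omega>)) \<in> borel_measurable sketch_sequences"
    unfolding \<Phi>_def by (rule measurable_compose[OF x measurable_expected_step[OF h]])
  have hx: "(\<lambda>\<omega>. h (?x \<omega>)) \<in> borel_measurable sketch_sequences"
    by (rule measurable_compose[OF x h])
  have Gx: "(\<lambda>\<omega>. ennreal ((norm (tilde_grad (?x \<omega>)))^2)) \<in> borel_measurable sketch_sequences"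
    "(\<lambda>\<omega>. ennreal (\<gamma> * (norm (tilde_grad (?x \<omega>)))^2)) \<in> borel_measurable sketch_sequences"
    using measurable_compose[OF x measurable_tilde_grad] by measurable
  have c: "0 \<le> c" unfolding c_def using Lf_pos one_le_L_D one_le_L_S_max by simp
  have \<Delta>: "0 \<le> ft_inf - f_inf" using Delta_pos by simp
  have "(\<integral>\<^sup>+\<omega>. ennreal (ft (dsgd gf s \<gamma> x0 \<omega> (Suc t)) - ft_inf) \<partial>sketch_sequences)
      = (\<integral>\<^sup>+\<omega>. \<Phi> (?x \<omega>) \<partial>sketch_sequences)"
    using nn_integral_dsgd_Suc[OF h, of \<gamma> x0 t] unfolding h_def \<Phi>_def .
  moreover have "ennreal \<gamma> * (\<integral>\<^sup>+\<omega>. ennreal ((norm (tilde_grad (?x \<omega>)))^2) \<partial>sketch_sequences)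
      = (\<integral>\<^sup>+\<omega>. ennreal (\<gamma> * (norm (tilde_grad (?x \<omega>)))^2) \<partial>sketch_sequences)"
    using \<gamma> Gx by (simp add: nn_integral_cmult[symmetric] ennreal_mult)
  ultimately have "(\<integral>\<^sup>+\<omega>. ennreal (ft (dsgd gf s \<gamma> x0 \<omega> (Suc t)) - ft_inf) \<partial>sketch_sequences)
          + ennreal \<gamma> * (\<integral>\<^sup>+\<omega>. ennreal ((norm (tilde_grad (?x \<omega>)))^2) \<partial>sketch_sequences)
      = (\<integral>\<^sup>+\<omega>. \<Phi> (?x \<omega>) + ennreal (\<gamma> * (norm (tilde_grad (?x \<omega>)))^2) \<partial>sketch_sequences)"
    using \<Phi>x Gx by (simp add: nn_integral_add)
  also have "\<dots> \<le> (\<integral>\<^sup>+\<omega>. ennreal ((1 + c) * (ft (?x \<omega>) - ft_inf) + c * (ft_inf - f_inf)) \<partial>sketch_sequences)"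
    unfolding \<Phi>_def h_def c_def by (intro nn_integral_mono expected_descent[OF \<gamma>])
  also have "\<dots> = (\<integral>\<^sup>+\<omega>. ennreal (1 + c) * h (?x \<omega>) + ennreal (c * (ft_inf - f_inf)) \<partial>sketch_sequences)"
    unfolding h_def using c \<Delta> ft_inf_le
    by (intro nn_integral_cong) (simp add: ennreal_plus ennreal_mult)
  also have "\<dots> = ennreal (1 + c) * (\<integral>\<^sup>+\<omega>. h (?x \<omega>) \<partial>sketch_sequences) + ennreal (c * (ft_inf - f_inf))"
    using hx by (simp add: nn_integral_add nn_integral_cmult sketches.emeasure_space_1)
  finally show ?thesis unfolding h_def .
qed

end

theorem corollary1:
  fixes f :: "real^'n \<Rightarrow> real" and gf :: "real^'n \<Rightarrow> real^'n"
    and s x0 :: "real^'n" and D :: "(real^'n^'n) measure"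
    and Lf \<epsilon> \<gamma> :: real and T :: nat
  assumes D_prob: "prob_space D"
    and D_sets: "sets D = sets borel"
    and ES: "integrable D (\<lambda>S. S)" "(\<integral>S. S \<partial>D) = mat 1"
    and ESTS: "integrable D (\<lambda>S. transpose S ** S)"
    and smooth: "L_smooth Lf f gf"
    and bdd: "bdd_below (range f)"
    and Lmax_fin: "\<exists>L. AE S in D. lambda_max (transpose S ** S) \<le> L"
    and Delta_pos: "Inf (range (f_tilde f s D)) - Inf (range f) > 0"
    and eps: "\<epsilon> > 0"
    and T_pos: "T > 0"
    and T_bound: "real T \<ge> 12 * (f_tilde f s D x0 - Inf (range (f_tilde f s D)))
                     * (Lf * sqrt (L_D D * L_S_max D))\<^sup>2 / \<epsilon> ^ 4
                     * max (3 * (f_tilde f s D x0 - Inf (range (f_tilde f s D))))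
                           (Inf (range (f_tilde f s D)) - Inf (range f))"
    and gamma: "\<gamma> = min (1 / (Lf * sqrt (L_D D * L_S_max D) * sqrt (real T)))
                        (\<epsilon>\<^sup>2 / (2 * (Lf * sqrt (L_D D * L_S_max D))\<^sup>2
                              * (Inf (range (f_tilde f s D)) - Inf (range f))))"
  shows "Min ((\<lambda>t. \<integral>\<^sup>+ \<omega>. ennreal ((norm (grad (f_tilde f s D) (dsgd gf s \<gamma> x0 \<omega> t)))\<^sup>2)
                     \<partial>(PiM UNIV (\<lambda>_. D))) ` {..<T}) \<le> ennreal (\<epsilon>\<^sup>2)"
proof -
  interpret dsgd_setting D f gf s Lf
    unfolding dsgd_setting_def dsgd_setting_axioms_def sketch_distribution_def
      sketch_distribution_axioms_def
    using assms by blast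
  define L where "L = Lf * sqrt (L_D D * L_S_max D)"
  have L: "0 < L" and L_sq: "L^2 = (Lf * L_D D) * (Lf * L_S_max D)"
    unfolding L_def using Lf_pos one_le_L_D one_le_L_S_max
    by (simp_all add: power_mult_distrib power2_eq_square)
  have d0: "0 \<le> ft x0 - ft_inf" using ft_inf_le by simp
  have "real T \<ge> 12 * (ft x0 - ft_inf) * L^2 / \<epsilon>^4 * max (3 * (ft x0 - ft_inf)) (ft_inf - f_inf)"
    and "\<gamma> = min (1 / (L * sqrt T)) (\<epsilon>^2 / (2 * L^2 * (ft_inf - f_inf)))"
    unfolding L_def using T_bound gamma by simp_all
  note stepsize = dsgd_stepsize_conditions[OF L Delta_pos d0 eps T_pos this]
  show ?thesis
    unfolding grad_f_tilde
  proof (rule min_le_of_perturbed_descent[where c="L^2 * \<gamma>^2" and \<Delta>="ft_inf - f_inf"])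
    show "(\<integral>\<^sup>+\<omega>. ennreal (ft (dsgd gf s \<gamma> x0 \<omega> 0) - ft_inf) \<partial>sketch_sequences)
        = ennreal (ft x0 - ft_inf)"
      by (simp add: sketches.emeasure_space_1)
    show "(\<integral>\<^sup>+\<omega>. ennreal (ft (dsgd gf s \<gamma> x0 \<omega> (Suc t)) - ft_inf) \<partial>sketch_sequences)
        + ennreal \<gamma> * (\<integral>\<^sup>+\<omega>. ennreal ((norm (tilde_grad (dsgd gf s \<gamma> x0 \<omega> t)))^2) \<partial>sketch_sequences)
      \<le> ennreal (1 + L^2 * \<gamma>^2) * (\<integral>\<^sup>+\<omega>. ennreal (ft (dsgd gf s \<gamma> x0 \<omega> t) - ft_inf) \<partial>sketch_sequences)
        + ennreal (L^2 * \<gamma>^2 * (ft_inf - f_inf))" for t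
      using expected_recursion[of \<gamma> x0 t] stepsize(1) unfolding L_sq by simp
  qed (use stepsize d0 Delta_pos eps T_pos in \<open>auto simp: mult.commute\<close>)
qed

end
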